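(* In the setting below, assume $Z^j\epsilon_{\bullet,j}\ne0$ for all $j$, $$\lambda\ge3\max_{i\in[n]}\Big(\sum_{j\in[p]}\frac{(Z^j_{i,\bullet}\epsilon_{\bullet,j})^2}{\|Z^j\epsilon_{\bullet,j}\|_2^2}\Big)^{1/2},$$ and $|O|(\lambda^2+\alpha)<1/10$, where $\alpha=\|I_n-Z\|_{\infty,\infty}$. Then $$\|\widehat\Delta\|_{2,2}\le140\lambda\|\xi^\top\|_{2,\infty}|O|^{1/2}\quad\text{and}\quad p^{-1/2}\|\widehat\Delta\|_{1,1}\le\|\widehat\Delta\|_{2,1}\le520\lambda\|\xi^\top\|_{2,\infty}|O|.$$
   Context: Setting. Let $n,p\ge 1$, $[n]=\{1,\dots,n\}$. $X=Y+E^*\in\mathbb R^{n\times p}$ where (C1) the rows of $Y$ are independent $\mathcal N_p(\mu^*,\Sigma^* )$, $\Sigma^*$ positive definite; (C2) $E^*$ deterministic, $[n]=I\cup O$ a partition with the rows of $E^*$ indexed by $I$ equal to zero, and every row of $E^*(\Sigma^* )^{-1/2}$ of Euclidean norm at most $M_E\sqrt p$; $\mu^*=0$. $\Omega^*=(\Sigma^* )^{-1}$ with diagonal entries $\omega^*_{jj}$, $B^*=\Omega^*\mathrm{diag}(\Omega^* )^{-1}$, $X^{(n)}=X/\sqrt n$, $\Theta^*=E^*B^*/\sqrt n$, $\xi=X^{(n)}B^*-\Theta^*$, $\epsilon_{ij}=\sqrt n(\omega^*_{jj})^{1/2}\xi_{ij}$. Notation: $A_{i,\bullet}$, $A_{\bullet,j}$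 rows/columns, $j^c=[p]\setminus\{j\}$, $\|A\|_{q_1,q_2}=(\sum_i\|A_{i,\bullet}\|_{q_1}^{q_2})^{1/q_2}$, $\|A\|_{\infty,\infty}=\max_{i,j}|A_{ij}|$, $\|\xi^\top\|_{2,\infty}=\max_j\|\xi_{\bullet,j}\|_2$. $Z^j$ is the orthogonal projector in $\mathbb R^n$ onto the orthogonal complement of the span of the columns of $X_{\bullet,j^c}$, and $Z=I_n-X(X^\top X)^\dagger X^\top$ ($\dagger$ = Moore–Penrose pseudo-inverse). Estimator: $\widehat\Theta$ minimizes over $\Theta\in\mathbb R^{n\times p}$ the function $\sum_{j=1}^p\|Z^j(X^{(n)}_{\bullet,j}-\Theta_{\bullet,j})\|_2+\lambda\|\Theta\|_{2,1}$, and $\widehat\Delta=\widehat\Theta-\Theta^*$. *)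

theory Defs
  imports "HOL-Analysis.Analysis"
begin

text \<open>Matrices are rendered as real^'c^'r (rows indexed by 'r, columns by 'c);
 A $ i is the i-th row, column j A is the j-th column.\<close>

definition pos_def_mat :: "real^'p^'p \<Rightarrow> bool" where
  "pos_def_mat A \<longleftrightarrow> transpose A = A \<and> (\<forall>x. x \<noteq> 0 \<longrightarrow> x \<bullet> (A *v x) > 0)"

definition psd_mat :: "real^'p^'p \<Rightarrow> bool" where
  "psd_mat A \<longleftrightarrow> transpose A = A \<and> (\<forall>x. x \<bullet> (A *v x) \<ge> 0)"

definition msqrt :: "real^'p^'p \<Rightarrow> real^'p^'p" where
  "msqrt A = (THE S. psd_mat S \<and> S ** S = A)"

definition pinv :: "real^'n^'m \<Rightarrow> real^'m^'n" where
  "pinv A = (THE G. A ** G ** A = A \<and> G ** A ** G = G \<and>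
      transpose (A ** G) = A ** G \<and> transpose (G ** A) = G ** A)"

definition proj_orth_compl :: "(real^'n) set \<Rightarrow> real^'n^'n" where
  "proj_orth_compl S = (THE P. \<forall>v. (\<forall>u\<in>S. (P *v v) \<bullet> u = 0) \<and> v - P *v v \<in> span S)"

definition Zj :: "real^'p^'n \<Rightarrow> 'p \<Rightarrow> real^'n^'n" where
  "Zj X j = proj_orth_compl {column k X | k. k \<noteq> j}"

definition Zfull :: "real^'p^'n \<Rightarrow> real^'n^'n" where
  "Zfull X = mat 1 - X ** pinv (transpose X ** X) ** transpose X"

definition norm22 :: "real^'p^'n \<Rightarrow> real" where
  "norm22 A = sqrt (\<Sum>i\<in>UNIV. (norm (A $ i))\<^sup>2)"

definition norm21 :: "real^'p^'n \<Rightarrow> real" where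
  "norm21 A = (\<Sum>i\<in>UNIV. norm (A $ i))"

definition norm11 :: "real^'p^'n \<Rightarrow> real" where
  "norm11 A = (\<Sum>i\<in>UNIV. \<Sum>j\<in>UNIV. \<bar>A $ i $ j\<bar>)"

definition norm_inf_inf :: "real^'p^'n \<Rightarrow> real" where
  "norm_inf_inf A = Max {\<bar>A $ i $ j\<bar> | i j. True}"

text \<open>\<parallel>A^T\<parallel>_{2,\<infinity>} = max_j \<parallel>A_{.,j}\<parallel>_2.\<close>
definition normT2inf :: "real^'p^'n \<Rightarrow> real" where
  "normT2inf A = Max {norm (column j A) | j. True}"

text \<open>B* = \<Omega>* diag(\<Omega>*)^{-1}.\<close>
definition Bmat :: "real^'p^'p \<Rightarrow> real^'p^'p" where
  "Bmat Om = (\<chi> i j. Om $ i $ j / Om $ j $ j)"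

definition objective :: "real^'p^'n \<Rightarrow> real \<Rightarrow> real^'p^'n \<Rightarrow> real" where
  "objective X lam Th =
     (\<Sum>j\<in>UNIV. norm (Zj X j *v ((1 / sqrt (real CARD('n))) *\<^sub>R column j X - column j Th)))
     + lam * norm21 Th"

end

theory Submission
  imports Defs
begin

text \<open>Write a_j = Z^j xi_j and b_j = Z^j Delta_j. Since Z^j annihilates every column of X except the
  j-th one and B*_jj = 1, the objective at Theta equals
  sum_j |a_j - Z^j (Theta - Theta*)_j| + lambda |Theta|_{2,1}, so minimality of the estimator and
  Theta*_I = 0 give sum_j (|a_j - b_j| - |a_j|) <= lambda (|Delta_O|_{2,1} - |Delta_I|_{2,1}).
  Expanding |b_j|^2 around the gradient a_j / |a_j| of the norm turns this into an upper bound for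
  sum_j |b_j|^2, in which the linear terms <a_j / |a_j|, Delta_j> are at most lambda/3 |Delta|_{2,1}
  by the choice of lambda; the same estimate yields the cone condition
  |Delta_I|_{2,1} <= 2 |Delta_O|_{2,1} <= 2 |O|^{1/2} |Delta|_{2,2}. From below,
  sum_j |b_j|^2 >= |Delta|_{2,2}^2 - alpha |Delta|_{2,1}^2, because I - Z^j projects onto a subspace
  of the range of I - Z. Under |O| (lambda^2 + alpha) < 1/10 the resulting quadratic inequality in
  |Delta|_{2,2} gives both bounds.\<close>

lemma matrix_mul_diff_ldistrib: "(A::real^'n^'m) ** (B - C) = A ** B - A ** C"
  by (simp add: matrix_matrix_mult_def vec_eq_iff sum_subtractf right_diff_distrib)

lemma matrix_mul_diff_rdistrib: "((A::real^'n^'m) - B) ** C = A ** C - B ** C"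
  by (simp add: matrix_matrix_mult_def vec_eq_iff sum_subtractf left_diff_distrib)

lemma matrix_mul_add_rdistrib: "((A::real^'n^'m) + B) ** C = A ** C + B ** C"
  by (simp add: matrix_matrix_mult_def vec_eq_iff sum.distrib distrib_right)

lemma transpose_diff: "transpose ((A::real^'n^'m) - B) = transpose A - transpose B"
  by (simp add: transpose_def vec_eq_iff)

lemma transpose_zero [simp]: "transpose (0::real^'n^'m) = 0"
  by (simp add: transpose_def vec_eq_iff)

lemma column_diff: "column j (A - B) = column j A - column j (B::real^'p^'n)"
  by (simp add: column_def vec_eq_iff)

lemma matrix_mult_transpose_self_eq_0:
  fixes M :: "real^'n^'m" assumes "M ** transpose M = 0" shows "M = 0"
proof -
  have "M $ i \<bullet> M $ i = (M ** transpose M) $ i $ i" for i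
    by (simp add: matrix_mult_transpose_dot_row row_def)
  then show ?thesis using assms by (simp add: vec_eq_iff)
qed

lemma symmetric_matrix_inner:
  fixes A :: "real^'n^'n" assumes "transpose A = A" shows "(A *v x) \<bullet> y = x \<bullet> (A *v y)"
  by (metis assms dot_lmul_matrix vector_transpose_matrix)


section \<open>Orthogonal projectors\<close>

definition orthogonal_projector :: "real^'n^'n \<Rightarrow> (real^'n) set \<Rightarrow> bool" where
  "orthogonal_projector P S \<longleftrightarrow> (\<forall>v. P *v v \<in> span S \<and> (\<forall>u\<in>span S. (v - P *v v) \<bullet> u = 0))"

lemma orthogonal_projector_exists: "\<exists>P. orthogonal_projector P (S :: (real^'n) set)"
proof -
  obtain B where B: "B \<subseteq> span S" "S \<subseteq> span B" "pairwise orthogonal B"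
    using orthogonal_basis_exists by blast
  have span_B: "span B = span S"
    using B by (metis span_minimal span_span subset_antisym subspace_span)
  define f where "f v = (\<Sum>b\<in>B. (b \<bullet> v / (b \<bullet> b)) *\<^sub>R b)" for v :: "real^'n"
  have "linear f"
    unfolding f_def
    by (intro linear_compose_sum ballI bounded_linear.linear bounded_linear_scaleR_const
        bounded_linear_divide[THEN bounded_linear_compose] bounded_linear_inner_right)
  have matrix_f: "matrix f *v v = f v" for v
    using matrix_vector_mul(2)[OF \<open>linear f\<close>] by metis
  show ?thesis
    unfolding orthogonal_projector_def
  proof (intro exI[of _ "matrix f"] allI conjI ballI)
    fix v u :: "real^'n"
    show "matrix f *v v \<in> span S"
      unfolding matrix_f f_def span_B[symmetric] by (intro span_sum span_scale) (simp add: span_base)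
    assume "u \<in> span S"
    then show "(v - matrix f *v v) \<bullet> u = 0"
      using Gram_Schmidt_step[OF B(3), of u v] span_B
      by (simp add: matrix_f f_def orthogonal_def inner_commute)
  qed
qed

context
  fixes P :: "real^'n^'n" and S :: "(real^'n) set"
  assumes P: "orthogonal_projector P S"
begin

lemma orthogonal_projector_in_span: "P *v v \<in> span S"
  using P by (simp add: orthogonal_projector_def)

lemma orthogonal_projector_residual_orthogonal: "u \<in> span S \<Longrightarrow> (v - P *v v) \<bullet> u = 0"
  using P by (simp add: orthogonal_projector_def)

lemma orthogonal_projector_fixes_span:
  assumes "u \<in> span S" shows "P *v u = u"
proof -
  have "u - P *v u \<in> span S" by (simp add: assms orthogonal_projector_in_span span_diff)
  then have "(u - P *v u) \<bullet> (u - P *v u) = 0" by (rule orthogonal_projector_residual_orthogonal)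
  then show ?thesis by simp
qed

lemma orthogonal_projector_idem: "P *v (P *v v) = P *v v"
  by (simp add: orthogonal_projector_fixes_span orthogonal_projector_in_span)

lemma orthogonal_projector_self_adjoint: "(P *v v) \<bullet> w = v \<bullet> (P *v w)"
proof -
  have "v \<bullet> (P *v w) = (P *v v) \<bullet> (P *v w)" "w \<bullet> (P *v v) = (P *v w) \<bullet> (P *v v)"
    using orthogonal_projector_residual_orthogonal[OF orthogonal_projector_in_span]
    by (simp_all add: inner_diff_left)
  then show ?thesis by (metis inner_commute)
qed

lemma orthogonal_projector_transpose: "transpose P = P"
proof -
  have "transpose P *v v = P *v v" for v
    using orthogonal_projector_self_adjoint[of v] vector_eq_rdot
    by (metis dot_lmul_matrix inner_commute transpose_matrix_vector transpose_transpose)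
  then show ?thesis by (subst matrix_eq) blast
qed

lemma orthogonal_projector_mult_idem: "P ** P = P"
  by (subst matrix_eq) (simp add: orthogonal_projector_idem flip: matrix_vector_mul_assoc)

lemma orthogonal_projector_pythagoras: "(norm v)\<^sup>2 = (norm (v - P *v v))\<^sup>2 + (norm (P *v v))\<^sup>2"
proof -
  have "(v - P *v v) \<bullet> (P *v v) = 0"
    by (simp add: orthogonal_projector_in_span orthogonal_projector_residual_orthogonal)
  then show ?thesis
    by (simp add: power2_norm_eq_inner inner_diff_left inner_diff_right inner_commute)
qed

lemma orthogonal_projector_norm_le: "norm (P *v v) \<le> norm v"
  using orthogonal_projector_pythagoras[of v] by (simp add: power2_le_imp_le)

lemma orthogonal_projector_eq_0:
  assumes "\<And>u. u \<in> span S \<Longrightarrow> v \<bullet> u = 0" shows "P *v v = 0"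
  using orthogonal_projector_residual_orthogonal[OF orthogonal_projector_in_span, of v v]
    assms[OF orthogonal_projector_in_span] by (simp add: inner_diff_left)

end

lemma orthogonal_projector_unique:
  assumes P: "orthogonal_projector P S" and Q: "orthogonal_projector Q S" shows "P = Q"
proof -
  have "P *v v = Q *v v" for v
  proof -
    let ?w = "P *v v - Q *v v"
    have "?w \<in> span S"
      by (simp add: P Q orthogonal_projector_in_span span_diff)
    then have "(v - Q *v v) \<bullet> ?w = 0" "(v - P *v v) \<bullet> ?w = 0"
      using orthogonal_projector_residual_orthogonal[OF P] orthogonal_projector_residual_orthogonal[OF Q]
      by blast+
    moreover have "?w = (v - Q *v v) - (v - P *v v)" by simp
    ultimately have "?w \<bullet> ?w = 0" by (metis inner_diff_left diff_self)
    then show ?thesis by simp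
  qed
  then show ?thesis by (subst matrix_eq) blast
qed

lemma orthogonal_projector_norm_sq_le_subspace:
  assumes R: "orthogonal_projector R W" and P: "orthogonal_projector P C" and "W \<subseteq> span C"
  shows "(norm (R *v v))\<^sup>2 \<le> v \<bullet> (P *v v)"
proof -
  have "span W \<subseteq> span C" using assms(3) by (simp add: span_minimal)
  then have "R *v (v - P *v v) = 0"
    using orthogonal_projector_eq_0[OF R] orthogonal_projector_residual_orthogonal[OF P] by blast
  then have "R *v v = R *v (P *v v)" by (simp add: matrix_vector_mult_diff_distrib)
  then have "norm (R *v v) \<le> norm (P *v v)" by (simp add: orthogonal_projector_norm_le[OF R])
  then have "(norm (R *v v))\<^sup>2 \<le> (norm (P *v v))\<^sup>2" by (simp add: power_mono)
  also have "\<dots> = v \<bullet> (P *v v)"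
    by (simp add: power2_norm_eq_inner orthogonal_projector_self_adjoint[OF P]
        orthogonal_projector_idem[OF P])
  finally show ?thesis .
qed

lemma proj_orth_compl_eq:
  fixes S :: "(real^'n) set"
  assumes P: "orthogonal_projector P S" shows "proj_orth_compl S = mat 1 - P"
  unfolding proj_orth_compl_def
proof (rule the_equality)
  show "\<forall>v. (\<forall>u\<in>S. ((mat 1 - P) *v v) \<bullet> u = 0) \<and> v - (mat 1 - P) *v v \<in> span S"
    by (simp add: matrix_vector_mult_diff_rdistrib orthogonal_projector_in_span[OF P]
        orthogonal_projector_residual_orthogonal[OF P span_base])
next
  fix Q :: "real^'n^'n"
  assume Q: "\<forall>v. (\<forall>u\<in>S. (Q *v v) \<bullet> u = 0) \<and> v - Q *v v \<in> span S"
  have "orthogonal_projector (mat 1 - Q) S"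
    unfolding orthogonal_projector_def
  proof (intro allI conjI ballI)
    fix v u assume "u \<in> span S"
    then show "(v - (mat 1 - Q) *v v) \<bullet> u = 0"
      using Q orthogonal_to_span[of u S "Q *v v"]
      by (simp add: matrix_vector_mult_diff_rdistrib orthogonal_def)
  qed (use Q in \<open>simp add: matrix_vector_mult_diff_rdistrib\<close>)
  then have "mat 1 - Q = P" using orthogonal_projector_unique P by blast
  then show "Q = mat 1 - P" by (simp add: algebra_simps)
qed

lemma orthogonal_projector_compl_proj_orth_compl:
  "orthogonal_projector (mat 1 - proj_orth_compl S) S"
  using orthogonal_projector_exists[of S] proj_orth_compl_eq by fastforce

lemma proj_orth_compl_apply: "proj_orth_compl S *v v = v - (mat 1 - proj_orth_compl S) *v v"
  by (simp add: matrix_vector_mult_diff_rdistrib)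

lemma proj_orth_compl_self_adjoint: "(proj_orth_compl S *v v) \<bullet> w = v \<bullet> (proj_orth_compl S *v w)"
  using orthogonal_projector_self_adjoint[OF orthogonal_projector_compl_proj_orth_compl[of S], of v w]
  by (simp add: proj_orth_compl_apply[of S v] proj_orth_compl_apply[of S w] inner_diff_left
      inner_diff_right)

lemma proj_orth_compl_idem: "proj_orth_compl S *v (proj_orth_compl S *v v) = proj_orth_compl S *v v"
  using orthogonal_projector_idem[OF orthogonal_projector_compl_proj_orth_compl[of S], of v]
  by (simp add: matrix_vector_mult_diff_rdistrib matrix_vector_mult_diff_distrib)

lemma proj_orth_compl_inner_range:
  "(proj_orth_compl S *v w) \<bullet> (proj_orth_compl S *v v) = (proj_orth_compl S *v w) \<bullet> v"
  using proj_orth_compl_self_adjoint[of S "proj_orth_compl S *v w" v]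
  by (simp add: proj_orth_compl_idem)

lemma proj_orth_compl_pythagoras:
  "(norm v)\<^sup>2 = (norm (proj_orth_compl S *v v))\<^sup>2 + (norm ((mat 1 - proj_orth_compl S) *v v))\<^sup>2"
  using orthogonal_projector_pythagoras[OF orthogonal_projector_compl_proj_orth_compl[of S], of v]
  by (simp add: proj_orth_compl_apply[of S v, symmetric])

lemma norm_proj_orth_compl_le: "norm (proj_orth_compl S *v v) \<le> norm v"
  using proj_orth_compl_pythagoras[of v S] by (simp add: power2_le_imp_le)

lemma proj_orth_compl_span:
  assumes "u \<in> span S" shows "proj_orth_compl S *v u = 0"
  using orthogonal_projector_fixes_span[OF orthogonal_projector_compl_proj_orth_compl assms]
  by (simp add: proj_orth_compl_apply[of S u])


section \<open>The Moore--Penrose inverse\<close>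

definition penrose_inverse :: "real^'n^'m \<Rightarrow> real^'m^'n \<Rightarrow> bool" where
  "penrose_inverse A G \<longleftrightarrow> A ** G ** A = A \<and> G ** A ** G = G \<and>
      transpose (A ** G) = A ** G \<and> transpose (G ** A) = G ** A"

lemma penrose_inverse_unique:
  assumes "penrose_inverse A G1" and "penrose_inverse A G2" shows "G1 = G2"
proof -
  from assms have a1: "A ** G1 ** A = A" and b1: "G1 ** A ** G1 = G1"
    and c1: "transpose (A ** G1) = A ** G1" and d1: "transpose (G1 ** A) = G1 ** A"
    and a2: "A ** G2 ** A = A" and b2: "G2 ** A ** G2 = G2"
    and c2: "transpose (A ** G2) = A ** G2" and d2: "transpose (G2 ** A) = G2 ** A"
    by (auto simp: penrose_inverse_def)
  have tA1: "transpose A = transpose A ** transpose G1 ** transpose A"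
    and tA2: "transpose A = transpose A ** transpose G2 ** transpose A"
    using arg_cong[OF a1, of transpose] arg_cong[OF a2, of transpose]
    by (simp_all add: matrix_transpose_mul matrix_mul_assoc)
  have "G1 = G1 ** (transpose G1 ** transpose A)"
    using b1 c1 by (simp add: matrix_transpose_mul matrix_mul_assoc)
  also have "\<dots> = G1 ** (transpose G1 ** (transpose A ** transpose G2 ** transpose A))"
    by (simp only: tA2[symmetric])
  also have "\<dots> = G1 ** (transpose (A ** G1) ** transpose (A ** G2))"
    by (simp add: matrix_transpose_mul matrix_mul_assoc)
  also have "\<dots> = G1 ** A ** G1 ** A ** G2"
    using c1 c2 by (simp add: matrix_mul_assoc)
  finally have e1: "G1 = G1 ** A ** G2" using b1 by simp
  have "G2 = (transpose A ** transpose G2) ** G2"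
    using b2 d2 by (simp add: matrix_transpose_mul matrix_mul_assoc)
  also have "\<dots> = ((transpose A ** transpose G1 ** transpose A) ** transpose G2) ** G2"
    by (simp only: tA1[symmetric])
  also have "\<dots> = (transpose (G1 ** A) ** transpose (G2 ** A)) ** G2"
    by (simp add: matrix_transpose_mul matrix_mul_assoc)
  also have "\<dots> = G1 ** A ** (G2 ** A ** G2)"
    using d1 d2 by (simp add: matrix_mul_assoc)
  finally show ?thesis using e1 b2 by simp
qed

lemma symmetric_kernel_projector_mult_eq_0:
  fixes A :: "real^'n^'n"
  assumes "transpose A = A" and Q: "orthogonal_projector Q {v. A *v v = 0}"
  shows "A ** Q = 0" and "Q ** A = 0"
proof -
  have "span {v. A *v v = 0} = {v. A *v v = 0}"
    by (simp add: span_eq_iff subspace_def matrix_vector_right_distrib matrix_vector_mult_scaleR)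
  then have "A *v (Q *v v) = 0" for v using orthogonal_projector_in_span[OF Q, of v] by blast
  then show AQ: "A ** Q = 0" by (subst matrix_eq) (simp flip: matrix_vector_mul_assoc)
  show "Q ** A = 0"
    using arg_cong[OF AQ, of transpose] assms
    by (simp add: matrix_transpose_mul orthogonal_projector_transpose)
qed

lemma invertible_symmetric_add_kernel_projector:
  fixes A :: "real^'n^'n"
  assumes At: "transpose A = A" and Q: "orthogonal_projector Q {v. A *v v = 0}"
  shows "invertible (A + Q)"
proof -
  have "v = 0" if Cv: "(A + Q) *v v = 0" for v
  proof -
    have "(A *v v) \<bullet> (Q *v v) = v \<bullet> ((A ** Q) *v v)"
      by (simp add: symmetric_matrix_inner[OF At] matrix_vector_mul_assoc)
    then have "(Q *v v) \<bullet> ((A + Q) *v v) = (Q *v v) \<bullet> (Q *v v)"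
      using symmetric_kernel_projector_mult_eq_0[OF At Q]
      by (simp add: matrix_vector_mult_add_rdistrib inner_add_right inner_commute)
    then have Qv: "Q *v v = 0" using Cv by simp
    then have "v \<in> span {v. A *v v = 0}" using Cv by (simp add: matrix_vector_mult_add_rdistrib span_base)
    then show "v = 0" using orthogonal_projector_fixes_span[OF Q] Qv by metis
  qed
  then have "inj ((*v) (A + Q))"
    by (simp add: linear_injective_0 matrix_vector_mul_linear)
  then show ?thesis
    using matrix_left_invertible_injective invertible_left_inverse by blast
qed

text \<open>For symmetric A, adding the projector Q onto the kernel of A gives an invertible matrix,
  and (A + Q)^-1 - Q is the Moore--Penrose inverse.\<close>
lemma penrose_inverse_exists_symmetric:
  fixes A :: "real^'n^'n" assumes At: "transpose A = A"
  shows "\<exists>G. penrose_inverse A G"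
proof -
  obtain Q where Q: "orthogonal_projector Q {v. A *v v = 0}"
    using orthogonal_projector_exists by blast
  note AQ = symmetric_kernel_projector_mult_eq_0[OF At Q]
  note QQ = orthogonal_projector_mult_idem[OF Q] and Qt = orthogonal_projector_transpose[OF Q]
  obtain H where HC: "H ** (A + Q) = mat 1" and CH: "(A + Q) ** H = mat 1"
    using invertible_symmetric_add_kernel_projector[OF At Q] by (auto simp: invertible_def)
  have "Q ** (A + Q) = Q" "(A + Q) ** Q = Q"
    by (simp_all add: matrix_add_ldistrib matrix_mul_add_rdistrib AQ QQ)
  then have QH: "Q ** H = Q" and HQ: "H ** Q = Q"
    by (metis CH matrix_mul_assoc matrix_mul_rid, metis HC matrix_mul_assoc matrix_mul_lid)
  have AH: "A ** H = mat 1 - Q" and HA: "H ** A = mat 1 - Q"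
    using CH HC QH HQ by (simp_all add: matrix_mul_add_rdistrib matrix_add_ldistrib eq_diff_eq)
  define G where "G = H - Q"
  have AG: "A ** G = mat 1 - Q" and GA: "G ** A = mat 1 - Q" and QG: "Q ** G = 0"
    by (simp_all add: G_def matrix_mul_diff_ldistrib matrix_mul_diff_rdistrib AH HA AQ QH QQ)
  have "penrose_inverse A G"
    unfolding penrose_inverse_def AG GA
    by (simp add: matrix_mul_diff_rdistrib AQ QG transpose_diff Qt)
  then show ?thesis by blast
qed

lemma penrose_inverse_pinv_symmetric:
  fixes A :: "real^'n^'n" assumes "transpose A = A"
  shows "penrose_inverse A (pinv A)"
proof -
  obtain G where G: "penrose_inverse A G" using penrose_inverse_exists_symmetric[OF assms] by blast
  have "pinv A = G"
    unfolding pinv_def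
    by (rule the_equality; use G penrose_inverse_unique in \<open>simp add: penrose_inverse_def\<close>)
  then show ?thesis using G by simp
qed

lemma transpose_mult_pinv_projection:
  fixes X :: "real^'p^'n"
  shows "transpose X ** (X ** pinv (transpose X ** X) ** transpose X) = transpose X"
proof -
  define A where "A = transpose X ** X"
  define D where "D = A ** pinv A ** transpose X - transpose X"
  have At: "transpose A = A" by (simp add: A_def matrix_transpose_mul)
  have "A ** pinv A ** A = A" "transpose (pinv A ** A) = pinv A ** A"
    using penrose_inverse_pinv_symmetric[OF At] by (simp_all add: penrose_inverse_def)
  then have "D ** transpose D = 0"
    by (simp add: D_def A_def transpose_diff matrix_transpose_mul matrix_mul_diff_ldistrib
        matrix_mul_diff_rdistrib matrix_mul_assoc)
  then have "D = 0" by (rule matrix_mult_transpose_self_eq_0)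
  then show ?thesis by (simp add: D_def A_def matrix_mul_assoc)
qed

lemma orthogonal_projector_compl_Zfull: "orthogonal_projector (mat 1 - Zfull X) (columns X)"
proof -
  define P where "P = X ** pinv (transpose X ** X) ** transpose X"
  have P_eq: "mat 1 - Zfull X = P" by (simp add: Zfull_def P_def)
  have "(v - P *v v) \<bullet> u = 0" if "u \<in> span (columns X)" for v u
  proof -
    have "transpose X *v (v - P *v v) = 0"
      using transpose_mult_pinv_projection[of X]
      by (simp add: P_def matrix_vector_mult_diff_distrib matrix_vector_mul_assoc
          del: transpose_matrix_vector)
    then have "(v - P *v v) \<bullet> column k X = 0" for k
      by (simp add: vec_eq_iff matrix_vector_mult_def transpose_def column_def inner_vec_def
          mult.commute del: transpose_matrix_vector)
    then show ?thesis
      using orthogonal_to_span[OF that, of "v - P *v v"]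
      by (auto simp: columns_def orthogonal_def)
  qed
  moreover have "P *v v \<in> span (columns X)" for v
    using matrix_vector_mult_in_columnspace[of X "(pinv (transpose X ** X) ** transpose X) *v v"]
    by (simp add: P_def matrix_vector_mul_assoc matrix_mul_assoc)
  ultimately show ?thesis by (simp add: P_eq orthogonal_projector_def)
qed


section \<open>The projectors \<open>Z\<^sup>j\<close>\<close>

lemma Zj_column_other: "k \<noteq> j \<Longrightarrow> Zj X j *v column k X = 0"
  unfolding Zj_def by (rule proj_orth_compl_span) (auto intro: span_base)

lemma Zj_matrix_vector_mult: "Zj X j *v (X *v c) = c $ j *\<^sub>R (Zj X j *v column j X)"
proof -
  have "X *v c = (\<Sum>k\<in>UNIV. c $ k *\<^sub>R column k X)"
    by (simp add: matrix_mult_sum scalar_mult_eq_scaleR)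
  then have "Zj X j *v (X *v c) = (\<Sum>k\<in>UNIV. c $ k *\<^sub>R (Zj X j *v column k X))"
    by (simp add: linear_sum[OF matrix_vector_mul_linear] o_def matrix_vector_mult_scaleR)
  also have "\<dots> = c $ j *\<^sub>R (Zj X j *v column j X)"
    by (subst sum.remove[of _ j]) (simp_all add: Zj_column_other)
  finally show ?thesis .
qed

lemma norm_sq_compl_Zj_le: "(norm ((mat 1 - Zj X j) *v v))\<^sup>2 \<le> v \<bullet> ((mat 1 - Zfull X) *v v)"
proof (rule orthogonal_projector_norm_sq_le_subspace)
  show "orthogonal_projector (mat 1 - Zj X j) {column k X | k. k \<noteq> j}"
    unfolding Zj_def by (rule orthogonal_projector_compl_proj_orth_compl)
  show "{column k X | k. k \<noteq> j} \<subseteq> span (columns X)"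
    by (auto simp: columns_def intro: span_base)
qed (rule orthogonal_projector_compl_Zfull)


lemma norm_sq_vec: "(norm (v::real^'n))\<^sup>2 = (\<Sum>j\<in>UNIV. (v $ j)\<^sup>2)"
  unfolding power2_norm_eq_inner by (simp add: inner_vec_def power2_eq_square)

lemma norm_vec_abs [simp]: "norm (\<chi> j. \<bar>(v::real^'n) $ j\<bar>) = norm v"
  by (simp add: norm_eq_sqrt_inner inner_vec_def)

lemma norm_vec_mult_le: "norm (\<chi> j. x $ j * y $ j) \<le> norm x * norm (y::real^'n)"
proof -
  have "(y $ j)\<^sup>2 \<le> (norm y)\<^sup>2" for j
    using power_mono[OF component_le_norm_cart[of y j], of 2] by simp
  have "(norm (\<chi> j. x $ j * y $ j))\<^sup>2 = (\<Sum>j\<in>UNIV. (x $ j)\<^sup>2 * (y $ j)\<^sup>2)"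
    by (simp add: norm_sq_vec power_mult_distrib)
  also have "\<dots> \<le> (\<Sum>j\<in>UNIV. (x $ j)\<^sup>2 * (norm y)\<^sup>2)"
    using \<open>\<And>j. (y $ j)\<^sup>2 \<le> (norm y)\<^sup>2\<close> by (intro sum_mono mult_left_mono) auto
  also have "\<dots> = (norm x * norm y)\<^sup>2" by (simp add: norm_sq_vec sum_distrib_right power_mult_distrib)
  finally show ?thesis by (rule power2_le_imp_le) simp
qed

lemma sum_abs_le_sqrt_card_norm: "(\<Sum>j\<in>UNIV. \<bar>(x::real^'p) $ j\<bar>) \<le> sqrt (real CARD('p)) * norm x"
proof -
  have "(\<Sum>j\<in>UNIV. \<bar>x $ j\<bar>)\<^sup>2 \<le> (\<Sum>j\<in>UNIV. \<bar>x $ j\<bar>\<^sup>2) * real CARD('p)"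
    by (rule sum_squared_le_sum_of_squares)
  also have "\<dots> = (sqrt (real CARD('p)) * norm x)\<^sup>2" by (simp add: norm_sq_vec power_mult_distrib)
  finally show ?thesis by (rule power2_le_imp_le) simp
qed

lemma inner_matrix_vector_le:
  assumes "\<And>i k. \<bar>M $ i $ k\<bar> \<le> c"
  shows "v \<bullet> (M *v v) \<le> c * (\<Sum>i\<in>UNIV. \<bar>(v::real^'n) $ i\<bar>)\<^sup>2"
proof -
  have "v \<bullet> (M *v v) = (\<Sum>i\<in>UNIV. \<Sum>k\<in>UNIV. v $ i * M $ i $ k * v $ k)"
    by (simp add: inner_vec_def matrix_vector_mult_def sum_distrib_left mult_ac)
  also have "\<dots> \<le> (\<Sum>i\<in>UNIV. \<Sum>k\<in>UNIV. c * (\<bar>v $ i\<bar> * \<bar>v $ k\<bar>))"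
  proof (intro sum_mono)
    fix i k
    have "v $ i * M $ i $ k * v $ k \<le> \<bar>v $ i * M $ i $ k * v $ k\<bar>" by simp
    also have "\<dots> = \<bar>M $ i $ k\<bar> * (\<bar>v $ i\<bar> * \<bar>v $ k\<bar>)" by (simp add: abs_mult)
    also have "\<dots> \<le> c * (\<bar>v $ i\<bar> * \<bar>v $ k\<bar>)" by (simp add: assms mult_right_mono)
    finally show "v $ i * M $ i $ k * v $ k \<le> c * (\<bar>v $ i\<bar> * \<bar>v $ k\<bar>)" .
  qed
  also have "\<dots> = c * (\<Sum>i\<in>UNIV. \<bar>v $ i\<bar>)\<^sup>2"
    by (simp add: power2_eq_square sum_distrib_left sum_distrib_right mult_ac)
  finally show ?thesis .
qed

text \<open>The unit vector of a is the gradient of the norm at a, so the bracket e is the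
  first-order remainder of the convex function norm.\<close>
lemma norm_sq_eq_gradient_remainder:
  fixes a b :: "'a::real_inner"
  assumes "a \<noteq> 0"
  defines "e \<equiv> norm (a - b) - norm a + ((1 / norm a) *\<^sub>R a) \<bullet> b"
  shows "0 \<le> e" and "(norm b)\<^sup>2 = (norm (a - b) - norm a)\<^sup>2 + 2 * norm a * e"
proof -
  have na: "norm a > 0" using assms by simp
  have "((1 / norm a) *\<^sub>R a) \<bullet> (a - b) \<le> norm (a - b)"
    using norm_cauchy_schwarz[of "(1 / norm a) *\<^sub>R a" "a - b"] na by simp
  then show "0 \<le> e"
    using na by (simp add: e_def inner_diff_right dot_square_norm power2_eq_square)
  have "(norm (a - b))\<^sup>2 = (norm a)\<^sup>2 - 2 * (a \<bullet> b) + (norm b)\<^sup>2"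
    by (simp add: power2_norm_eq_inner inner_diff_left inner_diff_right inner_commute)
  then show "(norm b)\<^sup>2 = (norm (a - b) - norm a)\<^sup>2 + 2 * norm a * e"
    using na by (simp add: e_def power2_eq_square algebra_simps)
qed

lemma norm22_sq: "(norm22 A)\<^sup>2 = (\<Sum>j\<in>UNIV. (norm (column j A))\<^sup>2)"
proof -
  have "(norm22 A)\<^sup>2 = (\<Sum>i\<in>UNIV. \<Sum>j\<in>UNIV. (A $ i $ j)\<^sup>2)"
    by (simp add: norm22_def sum_nonneg norm_sq_vec)
  also have "\<dots> = (\<Sum>j\<in>UNIV. (norm (column j A))\<^sup>2)"
    by (subst sum.swap) (simp add: norm_sq_vec column_def)
  finally show ?thesis .
qed

lemma norm11_le_sqrt_card_norm21: "norm11 (A::real^'p^'n) \<le> sqrt (real CARD('p)) * norm21 A"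
  unfolding norm11_def norm21_def sum_distrib_left by (intro sum_mono sum_abs_le_sqrt_card_norm)

lemma norm21_split: "norm21 A = (\<Sum>i\<in>S. norm (A $ i)) + (\<Sum>i\<in>-S. norm (A $ i))"
  unfolding norm21_def by (subst sum.union_disjoint[symmetric]) (auto intro: sum.cong)

lemma sum_norm_rows_le_sqrt_card_norm22:
  "(\<Sum>i\<in>S. norm (A $ i)) \<le> sqrt (real (card S)) * norm22 A"
proof -
  have "(\<Sum>i\<in>S. norm (A $ i))\<^sup>2 \<le> (\<Sum>i\<in>S. (norm (A $ i))\<^sup>2) * real (card S)"
    by (rule sum_squared_le_sum_of_squares)
  also have "\<dots> \<le> (\<Sum>i\<in>UNIV. (norm (A $ i))\<^sup>2) * real (card S)"
    by (intro mult_right_mono sum_mono2) simp_all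
  also have "\<dots> = (sqrt (real (card S)) * norm22 A)\<^sup>2"
    by (simp add: norm22_def sum_nonneg power_mult_distrib)
  finally show ?thesis by (rule power2_le_imp_le) (simp add: norm22_def sum_nonneg)
qed

lemma sum_sq_column_abs_sums_le: "(\<Sum>j\<in>UNIV. (\<Sum>i\<in>UNIV. \<bar>A $ i $ j\<bar>)\<^sup>2) \<le> (norm21 A)\<^sup>2"
proof -
  have "(\<Sum>j\<in>UNIV. (\<Sum>i\<in>UNIV. \<bar>A $ i $ j\<bar>)\<^sup>2) = (norm (\<Sum>i\<in>UNIV. \<chi> j. \<bar>A $ i $ j\<bar>))\<^sup>2"
    by (simp add: norm_sq_vec sum_component)
  also have "\<dots> \<le> (\<Sum>i\<in>UNIV. norm (\<chi> j. \<bar>A $ i $ j\<bar>))\<^sup>2"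
    by (intro power_mono norm_sum) simp
  finally show ?thesis by (simp add: norm21_def)
qed

lemma abs_le_norm_inf_inf: "\<bar>A $ i $ j\<bar> \<le> norm_inf_inf A"
proof -
  have "{\<bar>A $ i $ j\<bar> | i j. True} = (\<lambda>(i, j). \<bar>A $ i $ j\<bar>) ` UNIV" by auto
  then have "finite {\<bar>A $ i $ j\<bar> | i j. True}" by simp
  then show ?thesis unfolding norm_inf_inf_def by (rule Max_ge) blast
qed

lemma norm_column_le_normT2inf: "norm (column j A) \<le> normT2inf A"
  unfolding normT2inf_def by (rule Max_ge[OF finite_image_set]) auto

lemma entrywise_product_column_sums_le:
  fixes U A :: "real^'p^'n"
  assumes U: "\<And>i. norm (U $ i) \<le> c"
  shows "(\<Sum>j\<in>UNIV. \<Sum>i\<in>UNIV. U $ i $ j * A $ i $ j) \<le> c * norm21 A"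
    and "norm (\<chi> j. \<Sum>i\<in>UNIV. U $ i $ j * A $ i $ j) \<le> c * norm21 A"
proof -
  have row_le: "norm (U $ i) * norm (A $ i) \<le> c * norm (A $ i)" for i
    by (simp add: U mult_right_mono)
  have "(\<Sum>j\<in>UNIV. \<Sum>i\<in>UNIV. U $ i $ j * A $ i $ j) = (\<Sum>i\<in>UNIV. U $ i \<bullet> A $ i)"
    by (subst sum.swap) (simp add: inner_vec_def)
  also have "\<dots> \<le> (\<Sum>i\<in>UNIV. c * norm (A $ i))"
    by (intro sum_mono order_trans[OF norm_cauchy_schwarz row_le])
  finally show "(\<Sum>j\<in>UNIV. \<Sum>i\<in>UNIV. U $ i $ j * A $ i $ j) \<le> c * norm21 A"
    by (simp add: norm21_def sum_distrib_left)
  have "norm (\<chi> j. \<Sum>i\<in>UNIV. U $ i $ j * A $ i $ j) = norm (\<Sum>i\<in>UNIV. \<chi> j. U $ i $ j * A $ i $ j)"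
    by (rule arg_cong[where f = norm]) (simp add: sum_component vec_eq_iff)
  also have "\<dots> \<le> (\<Sum>i\<in>UNIV. c * norm (A $ i))"
    by (intro order_trans[OF norm_sum] sum_mono order_trans[OF norm_vec_mult_le row_le])
  finally show "norm (\<chi> j. \<Sum>i\<in>UNIV. U $ i $ j * A $ i $ j) \<le> c * norm21 A"
    by (simp add: norm21_def sum_distrib_left)
qed

lemma norm21_diff_le_outlier_split:
  assumes "\<And>i. i \<notin> S \<Longrightarrow> T $ i = 0"
  shows "norm21 T - norm21 (T + A) \<le> (\<Sum>i\<in>S. norm (A $ i)) - (\<Sum>i\<in>-S. norm (A $ i))"
proof -
  have "norm (T $ i) - norm (T $ i + A $ i) \<le> (if i \<in> S then norm (A $ i) else - norm (A $ i))" for i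
    using assms[of i] norm_triangle_ineq2[of "T $ i" "T $ i + A $ i"] by (auto simp: norm_minus_commute)
  then have "norm21 T - norm21 (T + A) \<le> (\<Sum>i\<in>UNIV. if i \<in> S then norm (A $ i) else - norm (A $ i))"
    unfolding norm21_def by (simp add: sum_subtractf[symmetric] sum_mono)
  also have "\<dots> = (\<Sum>i\<in>S. norm (A $ i)) - (\<Sum>i\<in>-S. norm (A $ i))"
    by (simp add: sum.If_cases Int_UNIV_left sum_negf Compl_eq_Diff_UNIV)
  finally show ?thesis .
qed

lemma sum_norm_sq_Zj_columns_ge:
  "(norm22 A)\<^sup>2 - norm_inf_inf (mat 1 - Zfull X) * (norm21 A)\<^sup>2
     \<le> (\<Sum>j\<in>UNIV. (norm (Zj X j *v column j A))\<^sup>2)"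
proof -
  let ?al = "norm_inf_inf (mat 1 - Zfull X)"
  have "0 \<le> ?al" using abs_le_norm_inf_inf order_trans abs_ge_zero by blast
  have "(norm ((mat 1 - Zj X j) *v column j A))\<^sup>2 \<le> ?al * (\<Sum>i\<in>UNIV. \<bar>column j A $ i\<bar>)\<^sup>2" for j
    by (rule order_trans[OF norm_sq_compl_Zj_le inner_matrix_vector_le[OF abs_le_norm_inf_inf]])
  then have "(\<Sum>j\<in>UNIV. (norm ((mat 1 - Zj X j) *v column j A))\<^sup>2)
      \<le> (\<Sum>j\<in>UNIV. ?al * (\<Sum>i\<in>UNIV. \<bar>A $ i $ j\<bar>)\<^sup>2)"
    by (intro sum_mono) (simp add: column_def)
  also have "\<dots> \<le> ?al * (norm21 A)\<^sup>2"
    using \<open>0 \<le> ?al\<close> by (simp add: sum_distrib_left[symmetric] mult_left_mono sum_sq_column_abs_sums_le)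
  finally have "(\<Sum>j\<in>UNIV. (norm ((mat 1 - Zj X j) *v column j A))\<^sup>2) \<le> ?al * (norm21 A)\<^sup>2" .
  moreover have "(norm (column j A))\<^sup>2
      = (norm (Zj X j *v column j A))\<^sup>2 + (norm ((mat 1 - Zj X j) *v column j A))\<^sup>2" for j
    unfolding Zj_def by (rule proj_orth_compl_pythagoras)
  ultimately show ?thesis by (simp add: norm22_sq sum.distrib)
qed


section \<open>The error bound\<close>

lemma sum_norm_sq_le_of_remainders:
  fixes a b :: "'p::finite \<Rightarrow> 'a::real_inner" and s L :: real
  defines "t j \<equiv> ((1 / norm (a j)) *\<^sub>R a j) \<bullet> b j"
  defines "R \<equiv> L + (\<Sum>j\<in>UNIV. t j)"
  assumes a_nz: "\<And>j. a j \<noteq> 0" and a_le: "\<And>j. norm (a j) \<le> s"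
    and excess: "(\<Sum>j\<in>UNIV. norm (a j - b j) - norm (a j)) \<le> L"
  shows "0 \<le> R" and "(\<Sum>j\<in>UNIV. (norm (b j))\<^sup>2) \<le> (R + norm (\<chi> j. t j))\<^sup>2 + 2 * s * R"
proof -
  define d where "d j = norm (a j - b j) - norm (a j)" for j
  define r where "r j = d j + t j" for j
  have r_nn: "0 \<le> r j" for j
    using norm_sq_eq_gradient_remainder(1)[OF a_nz] by (simp add: r_def d_def t_def)
  have b_sq: "(norm (b j))\<^sup>2 = (d j)\<^sup>2 + 2 * norm (a j) * r j" for j
    using norm_sq_eq_gradient_remainder(2)[OF a_nz] by (simp add: r_def d_def t_def)
  have sum_r: "(\<Sum>j\<in>UNIV. r j) \<le> R"
    using excess by (simp add: R_def r_def d_def sum.distrib)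
  then show "0 \<le> R" using r_nn by (meson order_trans sum_nonneg)
  have "(\<chi> j. d j) = (\<chi> j. r j) - (\<chi> j. t j)" by (simp add: vec_eq_iff r_def)
  then have "norm (\<chi> j. d j) \<le> norm (\<chi> j. r j) + norm (\<chi> j. t j)"
    by (simp add: norm_triangle_ineq4)
  also have "norm (\<chi> j. r j) \<le> (\<Sum>j\<in>UNIV. r j)"
    using norm_le_l1_cart[of "\<chi> j. r j"] r_nn by simp
  finally have "norm (\<chi> j. d j) \<le> R + norm (\<chi> j. t j)" using sum_r by linarith
  then have "(norm (\<chi> j. d j))\<^sup>2 \<le> (R + norm (\<chi> j. t j))\<^sup>2"
    by (simp add: power_mono)
  then have "(\<Sum>j\<in>UNIV. (d j)\<^sup>2) \<le> (R + norm (\<chi> j. t j))\<^sup>2"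
    by (simp add: norm_sq_vec)
  moreover have "(\<Sum>j\<in>UNIV. 2 * norm (a j) * r j) \<le> 2 * s * R"
  proof -
    have "(\<Sum>j\<in>UNIV. 2 * norm (a j) * r j) \<le> (\<Sum>j\<in>UNIV. 2 * s * r j)"
      using a_le r_nn by (intro sum_mono mult_right_mono) simp_all
    also have "\<dots> \<le> 2 * s * R"
      using sum_r order_trans[OF norm_ge_zero a_le]
      by (simp add: sum_distrib_left[symmetric] mult_left_mono)
    finally show ?thesis .
  qed
  ultimately show "(\<Sum>j\<in>UNIV. (norm (b j))\<^sup>2) \<le> (R + norm (\<chi> j. t j))\<^sup>2 + 2 * s * R"
    by (simp add: b_sq sum.distrib)
qed

lemma cone_arith:
  fixes lam NO NI R :: real
  assumes "0 < lam" "0 \<le> R" "0 \<le> NI" and R: "R \<le> lam * (NO - NI) + lam / 3 * (NO + NI)"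
  shows "NI \<le> 2 * NO" and "R \<le> 4 / 3 * lam * NO"
proof -
  have "lam * (NO - NI) + lam / 3 * (NO + NI) = 4 / 3 * lam * NO - 2 / 3 * (lam * NI)"
    by (simp add: algebra_simps)
  then have R': "R \<le> 4 / 3 * lam * NO - 2 / 3 * (lam * NI)" using R by linarith
  have "0 \<le> lam * NI" using assms by simp
  with R' show "R \<le> 4 / 3 * lam * NO" by linarith
  from R' \<open>0 \<le> R\<close> have "lam * NI \<le> lam * (2 * NO)" by linarith
  then show "NI \<le> 2 * NO" using \<open>0 < lam\<close> by simp
qed

lemma le_of_sq_le_affine:
  fixes D c e :: real
  assumes "0 \<le> D" "0 \<le> e" "D\<^sup>2 \<le> c * D\<^sup>2 + e * D" "c \<le> 9 / 10"
  shows "D \<le> 10 * e"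
proof (cases "D = 0")
  case False
  have "D * D \<le> 10 * e * D"
    using assms mult_right_mono[OF \<open>c \<le> 9 / 10\<close>, of "D\<^sup>2"] by (simp add: power2_eq_square)
  then show ?thesis using False \<open>0 \<le> D\<close> by simp
qed (use assms in simp)

lemma cone_quadratic_bound:
  fixes lam s k al D NO NI R T :: real
  assumes "0 < lam" "0 \<le> s" "0 \<le> k" "0 \<le> al" "0 \<le> D" "0 \<le> NI" "0 \<le> R" "0 \<le> T"
    and NO: "NO \<le> sqrt k * D"
    and R: "R \<le> lam * (NO - NI) + lam / 3 * (NO + NI)" and T: "T \<le> lam / 3 * (NO + NI)"
    and quadratic: "D\<^sup>2 - al * (NO + NI)\<^sup>2 \<le> (R + T)\<^sup>2 + 2 * s * R"
    and small: "k * (lam\<^sup>2 + al) < 1 / 10"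
  shows "D \<le> 80 / 3 * s * lam * sqrt k"
proof -
  let ?K = "sqrt k"
  have K: "0 \<le> ?K" "?K\<^sup>2 = k" using assms by simp_all
  note cone = cone_arith[OF \<open>0 < lam\<close> \<open>0 \<le> R\<close> \<open>0 \<le> NI\<close> R]
  have N3: "NO + NI \<le> 3 * (?K * D)" using cone(1) NO by linarith
  have "4 / 3 * lam * NO \<le> 4 / 3 * lam * (?K * D)"
    using NO \<open>0 < lam\<close> by (intro mult_left_mono) simp_all
  then have R_le: "R \<le> 4 / 3 * lam * (?K * D)" using cone(2) by linarith
  have "lam / 3 * (NO + NI) \<le> lam / 3 * (3 * (?K * D))"
    using N3 assms by (intro mult_left_mono) simp_all
  then have "R + T \<le> 7 / 3 * lam * (?K * D)" using R_le T by simp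
  then have "(R + T)\<^sup>2 \<le> (7 / 3 * lam * (?K * D))\<^sup>2"
    by (rule power_mono) (use assms in simp)
  also have "\<dots> = 49 / 9 * lam\<^sup>2 * k * D\<^sup>2" using K by (simp add: power_mult_distrib power_divide)
  finally have "(R + T)\<^sup>2 \<le> 49 / 9 * lam\<^sup>2 * k * D\<^sup>2" .
  moreover have "al * (NO + NI)\<^sup>2 \<le> 9 * al * k * D\<^sup>2"
  proof -
    have "(NO + NI)\<^sup>2 \<le> (3 * (?K * D))\<^sup>2"
      using N3 cone(1) \<open>0 \<le> NI\<close> by (intro power_mono) simp_all
    then have "al * (NO + NI)\<^sup>2 \<le> al * (3 * (?K * D))\<^sup>2"
      using \<open>0 \<le> al\<close> by (rule mult_left_mono)
    then show ?thesis using K by (simp add: power_mult_distrib)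
  qed
  moreover have "2 * s * R \<le> 2 * s * (4 / 3 * lam * (?K * D))"
    using R_le assms by (intro mult_left_mono) simp_all
  ultimately have quad_D: "D\<^sup>2 \<le> (9 * (al * k) + 49 / 9 * (lam\<^sup>2 * k)) * D\<^sup>2 + (8 / 3 * s * lam * ?K) * D"
    using quadratic by (simp add: algebra_simps)
  have "k * (lam\<^sup>2 + al) = lam\<^sup>2 * k + al * k" by (simp add: algebra_simps)
  moreover have "0 \<le> lam\<^sup>2 * k" using assms by simp
  ultimately have c_le: "9 * (al * k) + 49 / 9 * (lam\<^sup>2 * k) \<le> 9 / 10" using small by linarith
  have "D \<le> 10 * (8 / 3 * s * lam * ?K)"
    by (rule le_of_sq_le_affine[OF \<open>0 \<le> D\<close> _ quad_D c_le]) (use assms in simp)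
  then show ?thesis by simp
qed

lemma error_bound_arith:
  fixes lam s k al D NO NI R T :: real
  assumes "0 < lam" "0 \<le> s" "0 \<le> k" "0 \<le> al" "0 \<le> D" "0 \<le> NI" "0 \<le> R" "0 \<le> T"
    and NO: "NO \<le> sqrt k * D"
    and R: "R \<le> lam * (NO - NI) + lam / 3 * (NO + NI)" and T: "T \<le> lam / 3 * (NO + NI)"
    and quadratic: "D\<^sup>2 - al * (NO + NI)\<^sup>2 \<le> (R + T)\<^sup>2 + 2 * s * R"
    and small: "k * (lam\<^sup>2 + al) < 1 / 10"
  shows "D \<le> 140 * lam * s * sqrt k" and "NO + NI \<le> 520 * lam * s * k"
proof -
  let ?K = "sqrt k"
  have K: "0 \<le> ?K" "?K\<^sup>2 = k" using assms by simp_all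
  have D: "D \<le> 80 / 3 * s * lam * ?K" by (rule cone_quadratic_bound) (use assms in auto)
  then show "D \<le> 140 * lam * s * ?K"
    using assms K by (simp add: mult_ac)
  have "NO + NI \<le> 3 * ?K * D"
    using cone_arith(1)[OF \<open>0 < lam\<close> \<open>0 \<le> R\<close> \<open>0 \<le> NI\<close> R] NO by linarith
  also have "\<dots> \<le> 3 * ?K * (80 / 3 * s * lam * ?K)"
    using D K by (intro mult_left_mono) simp_all
  also have "\<dots> = 80 * (lam * (s * k))" using K by (simp add: power2_eq_square mult_ac)
  also have "\<dots> \<le> 520 * (lam * (s * k))" using assms by simp
  finally show "NO + NI \<le> 520 * lam * s * k" by (simp only: mult.assoc)
qed

lemma norm_normalized_row_le:
  fixes a :: "'p::finite \<Rightarrow> real^'n"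
  assumes "lam \<ge> 3 * Max {sqrt (\<Sum>j\<in>UNIV. (a j $ i)\<^sup>2 / (norm (a j))\<^sup>2) | i. True}"
  shows "3 * norm (\<chi> j. a j $ i / norm (a j)) \<le> lam"
proof -
  have "norm (\<chi> j. a j $ i / norm (a j)) = sqrt (\<Sum>j\<in>UNIV. (a j $ i)\<^sup>2 / (norm (a j))\<^sup>2)"
    by (simp add: norm_eq_sqrt_inner inner_vec_def power_divide power2_eq_square)
  also have "\<dots> \<le> Max {sqrt (\<Sum>j\<in>UNIV. (a j $ i)\<^sup>2 / (norm (a j))\<^sup>2) | i. True}"
    by (rule Max_ge[OF finite_image_set]) auto
  finally show ?thesis using assms by linarith
qed

lemma Zj_estimator_scalar_bounds:
  fixes X xi Th A :: "real^'p^'n" and Out :: "'n set" and lam :: real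
  defines "a j \<equiv> Zj X j *v column j xi"
    and "NO \<equiv> (\<Sum>i\<in>Out. norm (A $ i))" and "NI \<equiv> (\<Sum>i\<in>-Out. norm (A $ i))"
  assumes a_nz: "\<And>j. a j \<noteq> 0"
    and row_le: "\<And>i. 3 * norm (\<chi> j. a j $ i / norm (a j)) \<le> lam"
    and basic: "(\<Sum>j\<in>UNIV. norm (a j - Zj X j *v column j A)) + lam * norm21 (Th + A)
        \<le> (\<Sum>j\<in>UNIV. norm (a j)) + lam * norm21 Th"
    and Th_out: "\<And>i. i \<notin> Out \<Longrightarrow> Th $ i = 0"
  shows "\<exists>R T. 0 \<le> R \<and> 0 \<le> T \<and> R \<le> lam * (NO - NI) + lam / 3 * (NO + NI)
    \<and> T \<le> lam / 3 * (NO + NI)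
    \<and> (norm22 A)\<^sup>2 - norm_inf_inf (mat 1 - Zfull X) * (NO + NI)\<^sup>2 \<le> (R + T)\<^sup>2 + 2 * normT2inf xi * R"
proof -
  define U :: "real^'p^'n" where "U = (\<chi> i j. a j $ i / norm (a j))"
  define b where "b j = Zj X j *v column j A" for j
  have t_eq: "((1 / norm (a j)) *\<^sub>R a j) \<bullet> b j = (\<Sum>i\<in>UNIV. U $ i $ j * A $ i $ j)" for j
  proof -
    have "((1 / norm (a j)) *\<^sub>R a j) \<bullet> b j = ((1 / norm (a j)) *\<^sub>R a j) \<bullet> column j A"
      by (simp add: a_def b_def Zj_def proj_orth_compl_inner_range)
    then show ?thesis by (simp add: U_def inner_vec_def sum_divide_distrib column_def)
  qed
  have N: "norm21 A = NO + NI" by (simp add: NO_def NI_def norm21_split)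
  have "norm21 Th - norm21 (Th + A) \<le> NO - NI"
    unfolding NO_def NI_def by (rule norm21_diff_le_outlier_split[OF Th_out])
  moreover have "0 \<le> lam"
    using order_trans[OF _ row_le] by (meson norm_ge_zero zero_le_mult_iff zero_le_numeral)
  ultimately have "lam * (norm21 Th - norm21 (Th + A)) \<le> lam * (NO - NI)"
    by (rule mult_left_mono)
  then have excess: "(\<Sum>j\<in>UNIV. norm (a j - b j) - norm (a j)) \<le> lam * (NO - NI)"
    using basic by (simp add: b_def sum_subtractf algebra_simps)
  have a_le: "norm (a j) \<le> normT2inf xi" for j
    unfolding a_def Zj_def by (rule order_trans[OF norm_proj_orth_compl_le norm_column_le_normT2inf])
  note descent = sum_norm_sq_le_of_remainders[where b = b, OF a_nz a_le excess, unfolded t_eq]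
  have "norm (U $ i) \<le> lam / 3" for i using row_le[of i] by (simp add: U_def)
  note U_sums = entrywise_product_column_sums_le[where A = A, OF this, unfolded N]
  have "(norm22 A)\<^sup>2 - norm_inf_inf (mat 1 - Zfull X) * (NO + NI)\<^sup>2 \<le> (\<Sum>j\<in>UNIV. (norm (b j))\<^sup>2)"
    using sum_norm_sq_Zj_columns_ge[of A X] by (simp add: b_def N)
  with descent U_sums show ?thesis
    by (intro exI[of _ "lam * (NO - NI) + (\<Sum>j\<in>UNIV. \<Sum>i\<in>UNIV. U $ i $ j * A $ i $ j)"]
        exI[of _ "norm (\<chi> j. \<Sum>i\<in>UNIV. U $ i $ j * A $ i $ j)"]) auto
qed

lemma Zj_estimator_error_bound:
  fixes X xi Th A :: "real^'p^'n" and Out :: "'n set" and lam :: real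
  defines "a j \<equiv> Zj X j *v column j xi"
  assumes a_nz: "\<And>j. a j \<noteq> 0"
    and lam_ge: "lam \<ge> 3 * Max {sqrt (\<Sum>j\<in>UNIV. (a j $ i)\<^sup>2 / (norm (a j))\<^sup>2) | i. True}"
    and basic: "(\<Sum>j\<in>UNIV. norm (a j - Zj X j *v column j A)) + lam * norm21 (Th + A)
        \<le> (\<Sum>j\<in>UNIV. norm (a j)) + lam * norm21 Th"
    and Th_out: "\<And>i. i \<notin> Out \<Longrightarrow> Th $ i = 0"
    and small: "real (card Out) * (lam\<^sup>2 + norm_inf_inf (mat 1 - Zfull X)) < 1 / 10"
  shows "norm22 A \<le> 140 * lam * normT2inf xi * sqrt (real (card Out))
    \<and> norm21 A \<le> 520 * lam * normT2inf xi * real (card Out)"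
proof -
  note row_le = norm_normalized_row_le[OF lam_ge]
  have "0 < lam"
  proof -
    obtain i where "a undefined $ i \<noteq> 0" using a_nz by (auto simp: vec_eq_iff)
    then have "0 < norm (\<chi> j. a j $ i / norm (a j))" by (auto simp: vec_eq_iff)
    then show ?thesis using row_le[of i] by linarith
  qed
  define NO where "NO = (\<Sum>i\<in>Out. norm (A $ i))"
  define NI where "NI = (\<Sum>i\<in>-Out. norm (A $ i))"
  obtain R T where R: "0 \<le> R" "R \<le> lam * (NO - NI) + lam / 3 * (NO + NI)"
    and T: "0 \<le> T" "T \<le> lam / 3 * (NO + NI)"
    and quadratic: "(norm22 A)\<^sup>2 - norm_inf_inf (mat 1 - Zfull X) * (NO + NI)\<^sup>2
      \<le> (R + T)\<^sup>2 + 2 * normT2inf xi * R"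
    using Zj_estimator_scalar_bounds[OF a_nz[unfolded a_def] row_le[unfolded a_def]
        basic[unfolded a_def] Th_out]
    unfolding NO_def NI_def by blast
  have "0 \<le> normT2inf xi"
    using order_trans[OF norm_ge_zero norm_column_le_normT2inf] .
  moreover have "0 \<le> norm_inf_inf (mat 1 - Zfull X)"
    using order_trans[OF abs_ge_zero abs_le_norm_inf_inf] .
  moreover have "0 \<le> norm22 A" by (simp add: norm22_def sum_nonneg)
  moreover have "0 \<le> NI" by (simp add: NI_def sum_nonneg)
  moreover have "NO \<le> sqrt (real (card Out)) * norm22 A"
    unfolding NO_def by (rule sum_norm_rows_le_sqrt_card_norm22)
  ultimately have "norm22 A \<le> 140 * lam * normT2inf xi * sqrt (real (card Out))"
    "NO + NI \<le> 520 * lam * normT2inf xi * real (card Out)"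
    using error_bound_arith[OF \<open>0 < lam\<close> _ of_nat_0_le_iff _ _ _ R(1) T(1) _ R(2) T(2) quadratic small]
    by blast+
  moreover have "norm21 A = NO + NI" by (simp add: NO_def NI_def norm21_split)
  ultimately show ?thesis by simp
qed

section \<open>The estimator\<close>

lemma pos_def_mat_invertible:
  assumes "pos_def_mat S" shows "invertible S"
proof -
  have "v = 0" if "S *v v = 0" for v
  proof (rule ccontr)
    assume "v \<noteq> 0"
    then have "0 < v \<bullet> (S *v v)" using assms unfolding pos_def_mat_def by blast
    then show False using that by simp
  qed
  then have "inj ((*v) S)" by (simp add: linear_injective_0 matrix_vector_mul_linear)
  then show ?thesis using matrix_left_invertible_injective invertible_left_inverse by blast
qed

lemma pos_def_mat_inverse_diag_pos:
  assumes "pos_def_mat S" shows "0 < matrix_inv S $ j $ j"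
proof -
  have "S ** matrix_inv S = mat 1"
    using pos_def_mat_invertible[OF assms] unfolding invertible_def matrix_inv_def
    by (rule someI2_ex) blast
  then have S_inv: "S *v (matrix_inv S *v axis j 1) = axis j 1"
    by (simp add: matrix_vector_mul_assoc)
  then have "matrix_inv S *v axis j 1 \<noteq> 0" by (auto simp: axis_eq_0_iff)
  then have "0 < (matrix_inv S *v axis j 1) \<bullet> (S *v (matrix_inv S *v axis j 1))"
    using assms unfolding pos_def_mat_def by blast
  then have "0 < (matrix_inv S *v axis j 1) \<bullet> axis j 1" by (simp only: S_inv)
  also have "\<dots> = matrix_inv S $ j $ j"
    by (simp add: inner_axis matrix_vector_mult_basis column_def)
  finally show ?thesis .
qed

lemma Zj_column_scaled_mult:
  "Zj X j *v column j ((c *\<^sub>R X) ** B) = (c * B $ j $ j) *\<^sub>R (Zj X j *v column j X)"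
proof -
  have "column j ((c *\<^sub>R X) ** B) = X *v (c *\<^sub>R column j B)"
    by (simp add: column_def matrix_matrix_mult_def matrix_vector_mult_def vec_eq_iff
        sum_distrib_left mult_ac)
  then show ?thesis by (simp add: Zj_matrix_vector_mult column_def)
qed

lemma objective_eq_projected:
  fixes X :: "real^'p^'n"
  assumes "\<And>j. B $ j $ j = 1"
  shows "objective X lam Theta
    = (\<Sum>j\<in>UNIV. norm (Zj X j *v column j ((1 / sqrt (real CARD('n))) *\<^sub>R X ** B - Theta)))
      + lam * norm21 Theta"
  by (simp add: objective_def assms column_diff matrix_vector_mult_diff_distrib Zj_column_scaled_mult
      matrix_vector_mult_scaleR)

lemma Zj_column_scaling:
  fixes xi :: "real^'p^'n"
  assumes "c j \<noteq> 0"
  shows "Zj X j *v column j (\<chi> i j. c j * xi $ i $ j) \<noteq> 0 \<longleftrightarrow> Zj X j *v column j xi \<noteq> 0"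
    and "((Zj X j *v column j (\<chi> i j. c j * xi $ i $ j)) $ i)\<^sup>2
        / (norm (Zj X j *v column j (\<chi> i j. c j * xi $ i $ j)))\<^sup>2
      = ((Zj X j *v column j xi) $ i)\<^sup>2 / (norm (Zj X j *v column j xi))\<^sup>2"
proof -
  have "column j (\<chi> i j. c j * xi $ i $ j) = c j *\<^sub>R column j xi"
    by (simp add: column_def vec_eq_iff)
  then have scaled: "Zj X j *v column j (\<chi> i j. c j * xi $ i $ j) = c j *\<^sub>R (Zj X j *v column j xi)"
    by (simp add: matrix_vector_mult_scaleR)
  then show "Zj X j *v column j (\<chi> i j. c j * xi $ i $ j) \<noteq> 0 \<longleftrightarrow> Zj X j *v column j xi \<noteq> 0"
    using assms by simp
  show "((Zj X j *v column j (\<chi> i j. c j * xi $ i $ j)) $ i)\<^sup>2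
        / (norm (Zj X j *v column j (\<chi> i j. c j * xi $ i $ j)))\<^sup>2
      = ((Zj X j *v column j xi) $ i)\<^sup>2 / (norm (Zj X j *v column j xi))\<^sup>2"
    using assms by (simp add: scaled power_mult_distrib)
qed

theorem mainTheorem9:
  fixes Y E :: "real^'p^'n" and Sigma :: "real^'p^'p" and Out :: "'n set"
    and M_E lam :: real and Thhat :: "real^'p^'n"
  defines "n \<equiv> real CARD('n)"
      and "p \<equiv> real CARD('p)"
      and "X \<equiv> Y + E"
  defines "Om \<equiv> matrix_inv Sigma"
  defines "B \<equiv> Bmat Om"
  defines "Xn \<equiv> (1 / sqrt n) *\<^sub>R X"
  defines "Th \<equiv> (1 / sqrt n) *\<^sub>R (E ** B)"
  defines "xi \<equiv> Xn ** B - Th"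
  defines "eps \<equiv> (\<chi> i j. sqrt n * sqrt (Om $ j $ j) * xi $ i $ j) :: real^'p^'n"
  defines "alpha \<equiv> norm_inf_inf (mat 1 - Zfull X)"
  defines "Delta \<equiv> Thhat - Th"
  assumes Sigma_pd: "pos_def_mat Sigma"
      and E_I: "\<forall>i. i \<notin> Out \<longrightarrow> E $ i = 0"
      and E_bound: "\<forall>i. norm ((E ** msqrt Om) $ i) \<le> M_E * sqrt p"
      and minim: "\<forall>Theta. objective X lam Thhat \<le> objective X lam Theta"
      and nonzero: "\<forall>j. Zj X j *v column j eps \<noteq> 0"
      and lam_ge: "lam \<ge> 3 * Max {sqrt (\<Sum>j\<in>UNIV.
             (((Zj X j *v column j eps) $ i))\<^sup>2 / (norm (Zj X j *v column j eps))\<^sup>2) | i. True}"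
      and small: "real (card Out) * (lam\<^sup>2 + alpha) < 1 / 10"
  shows "norm22 Delta \<le> 140 * lam * normT2inf xi * sqrt (real (card Out))
       \<and> norm11 Delta / sqrt p \<le> norm21 Delta
       \<and> norm21 Delta \<le> 520 * lam * normT2inf xi * real (card Out)"
proof -
  have Om_pos: "0 < Om $ j $ j" for j
    unfolding Om_def by (rule pos_def_mat_inverse_diag_pos[OF Sigma_pd])
  then have B_diag: "B $ j $ j = 1" for j by (simp add: B_def Bmat_def less_imp_neq[symmetric])
  have "objective X lam Theta = (\<Sum>j\<in>UNIV. norm (Zj X j *v column j xi - Zj X j *v column j (Theta - Th)))
      + lam * norm21 Theta" for Theta
    by (simp add: objective_eq_projected[OF B_diag] xi_def Xn_def n_def column_diff
        matrix_vector_mult_diff_distrib algebra_simps)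
  then have basic: "(\<Sum>j\<in>UNIV. norm (Zj X j *v column j xi - Zj X j *v column j Delta))
      + lam * norm21 (Th + Delta) \<le> (\<Sum>j\<in>UNIV. norm (Zj X j *v column j xi)) + lam * norm21 Th"
    using minim[rule_format, of Th] by (simp add: Delta_def column_diff)
  have "sqrt n * sqrt (Om $ j $ j) \<noteq> 0" for j using Om_pos[of j] by (simp add: n_def)
  note eps_scaling = Zj_column_scaling[of "\<lambda>j. sqrt n * sqrt (Om $ j $ j)", OF this]
  have Th_out: "Th $ i = 0" if "i \<notin> Out" for i
    using E_I that by (simp add: Th_def matrix_matrix_mult_def vec_eq_iff)
  have "Zj X j *v column j xi \<noteq> 0" for j using nonzero eps_scaling(1) unfolding eps_def by blast
  moreover have "lam \<ge> 3 * Max {sqrt (\<Sum>j\<in>UNIV.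
      ((Zj X j *v column j xi) $ i)\<^sup>2 / (norm (Zj X j *v column j xi))\<^sup>2) | i. True}"
    using lam_ge unfolding eps_def by (simp only: eps_scaling(2))
  ultimately have "norm22 Delta \<le> 140 * lam * normT2inf xi * sqrt (real (card Out))
      \<and> norm21 Delta \<le> 520 * lam * normT2inf xi * real (card Out)"
    by (rule Zj_estimator_error_bound[OF _ _ basic Th_out small[unfolded alpha_def]])
  moreover have "norm11 Delta / sqrt p \<le> norm21 Delta"
    using norm11_le_sqrt_card_norm21[of Delta] by (simp add: p_def divide_le_eq mult.commute)
  ultimately show ?thesis by blast
qed

end
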